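(* Let $t_1, t_2 \in \mathsf{Topo}$ and let $f$ embed $t_1$ inside $t_2$. For every $q \in \mathsf{PIFOTree}(t_1)$, if $\mathsf{pop}(q)$ is defined, then so is $\mathsf{pop}(\widehat f(q))$.
   Context: Fix a set $\mathsf{Pkt}$ of packets and a totally ordered set $\mathsf{Rk}$ of ranks (smaller is more favorable). PIFOs: for a set $S$, a PIFO over $S$ is a finite sequence of pairs $(s,r)\in S\times\mathsf{Rk}$ in insertion order; $\mathsf{PIFO}(S)$ is the set of these. $\mathsf{pop}_{\mathsf{PIFO}}(p)$ is undefined if $p$ is empty; otherwise it removes the entry of minimal rank (earliest-inserted among ties) and returns $(s,p')$, its element and the rest. Topologies: $\mathsf{Topo}$ is the smallest set with $*\in\mathsf{Topo}$ and $\mathsf{Node}(\vec t)\in\mathsf{Topo}$ for $n\in\mathbb{N}$, $\vec t\in\mathsf{Topo}^n$. PIFO trees: $\mathsf{Leaf}(p)\in\mathsf{PIFOTree}( * )$ for $p\in\mathsf{PIFO}(\mathsf{Pkt})$; $\mathsf{Internal}(\vec q,p)\in\mathsf{PIFOTree}(\mathsf{Node}(\vec t))$ whenever $\vec t\in\mathsf{Topo}^n$, $p\in\mathsf{PIFO}(\{1,\dots,n\})$, $\vec q[i]\in\mathsf{PIFOTree}(\vec t[i])$. $\vec q[q'/i]$ replaces the $i$-th entry by $q'$. pop (partial): $\mathsf{pop}(\mathsf{Leaf}(p))=(pkt,\mathsf{Leaf}(p'))$ if $\mathsf{pop}_{\mathsf{PIFO}}(p)=(pkt,p')$; $\mathsf{pop}(\mathsf{Internal}(\vec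 q,p))=(pkt,\mathsf{Internal}(\vec q[q'/i],p'))$ if $\mathsf{pop}_{\mathsf{PIFO}}(p)=(i,p')$ and $\mathsf{pop}(\vec q[i])=(pkt,q')$; undefined otherwise. Addresses: $\mathsf{Addr}(t)\subseteq\mathbb{N}^*$ is the smallest set with $\epsilon\in\mathsf{Addr}(t)$ and $i\cdot\alpha\in\mathsf{Addr}(\mathsf{Node}(\vec t))$ for $1\le i\le n$, $\alpha\in\mathsf{Addr}(\vec t[i])$. Subtrees: $t/\epsilon=t$, $\mathsf{Node}(\vec t)/(i\cdot\alpha)=\vec t[i]/\alpha$. An embedding of $t_1$ in $t_2$ is an injective $f:\mathsf{Addr}(t_1)\to\mathsf{Addr}(t_2)$ with $f(\epsilon)=\epsilon$, $t_2/f(\alpha)=*$ whenever $t_1/\alpha=*$, and $\alpha$ a prefix of $\alpha'$ iff $f(\alpha)$ a prefix of $f(\alpha')$. If $t_1=*$ then $t_2=*$; if $t_1=\mathsf{Node}(\vec t_1)$, the map $f_i$ defined by $f(i\cdot\alpha)=f(i)\cdot f_i(\alpha)$ is an embedding of $t_1/i$ in $t_2/f(i)$. Lifting $\widehat f:\mathsf{PIFOTree}(t_1)\to\mathsf{PIFOTree}(t_2)$, by recursion on $t_1$: if $t_1=*$, $\widehat f(q)=q$. If $t_1=\mathsf{Node}(\vec t_1)$ with $n$ children and $q=\mathsf{Internal}(\vec q,p)$, define for each address $\alpha$ of $t_2$ that is a prefix of some $f(i)$ a tree $\widehat f(q)_\alpha\in\mathsf{PIFOTree}(t_2/\alpha)$,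 from longer to shorter $\alpha$: if $\alpha=f(i)$, $\widehat f(q)_\alpha=\widehat{f_i}(\vec q[i])$; otherwise $t_2/\alpha$ has some $m$ children and $\widehat f(q)_\alpha=\mathsf{Internal}(\vec q_\alpha,p_\alpha)$, where $\vec q_\alpha[j]=\widehat f(q)_{\alpha\cdot j}$ if $\alpha\cdot j$ is a prefix of some $f(i)$ and otherwise $\vec q_\alpha[j]$ is the tree of topology $t_2/(\alpha\cdot j)$ with all PIFOs empty; and $p_\alpha$ is obtained from $p$ by replacing each entry $(i,r)$ by $(j,r)$ where $\alpha\cdot j$ is a prefix of $f(i)$, deleting entries for which no such $j$ exists, keeping the order. Finally $\widehat f(q)=\widehat f(q)_\epsilon$. *)

theory Defs
  imports Main "HOL-Library.Sublist"
begin

text \<open>A PIFO over a set S with ranks in a linear order 'r is a list of (element, rank)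
  pairs in insertion order.  pop removes the earliest-inserted entry of minimal rank.\<close>

definition pop_pifo :: "('a \<times> 'r::linorder) list \<Rightarrow> ('a \<times> ('a \<times> 'r) list) option" where
  "pop_pifo p =
     (if p = [] then None
      else (let k = (LEAST k. k < length p \<and> (\<forall>j<length p. snd (p ! k) \<le> snd (p ! j)))
            in Some (fst (p ! k), take k p @ drop (Suc k) p)))"

datatype topo = Star | Node "topo list"

text \<open>Raw PIFO trees; children of an internal node are indexed 1..n in the PIFO.\<close>
datatype ('pkt, 'r) ptree =
    Leaf "('pkt \<times> 'r) list"
  | Internal "('pkt, 'r) ptree list" "(nat \<times> 'r) list"

lemma size_nth_less_aux: "x < length xs \<Longrightarrow> g (xs ! x) < Suc (size_list g xs)"
  by (meson le_imp_less_Suc nth_mem order_refl size_list_estimation')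

function wf_tree :: "topo \<Rightarrow> ('pkt, 'r) ptree \<Rightarrow> bool" where
  "wf_tree Star (Leaf p) = True"
| "wf_tree (Node ts) (Internal qs p) =
     (length qs = length ts \<and> (\<forall>i<length ts. wf_tree (ts ! i) (qs ! i)) \<and>
      (\<forall>(i, r) \<in> set p. 1 \<le> i \<and> i \<le> length ts))"
| "wf_tree Star (Internal qs p) = False"
| "wf_tree (Node ts) (Leaf p) = False"
  by pat_completeness auto
termination
  by (relation "measure (\<lambda>(t, q). size t)") (auto intro: size_nth_less_aux)

function pop :: "('pkt, 'r::linorder) ptree \<Rightarrow> ('pkt \<times> ('pkt, 'r) ptree) option" where
  "pop (Leaf p) =
     (case pop_pifo p of None \<Rightarrow> None | Some (pkt, p') \<Rightarrow> Some (pkt, Leaf p'))"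
| "pop (Internal qs p) =
     (case pop_pifo p of
        None \<Rightarrow> None
      | Some (i, p') \<Rightarrow>
          (if 1 \<le> i \<and> i \<le> length qs then
             (case pop (qs ! (i - 1)) of
                None \<Rightarrow> None
              | Some (pkt, q') \<Rightarrow> Some (pkt, Internal (qs[i - 1 := q']) p'))
           else None))"
  by pat_completeness auto
termination
  apply (relation "measure size")
   apply simp
  apply clarsimp
  subgoal for qs p a b
  proof -
    assume "Suc 0 \<le> a" "a \<le> length qs"
    then have "a - Suc 0 < length qs" by simp
    then have "size (qs ! (a - Suc 0)) < Suc (size_list size qs)" by (rule size_nth_less_aux)
    then show ?thesis by simp
  qed
  done

inductive is_addr :: "topo \<Rightarrow> nat list \<Rightarrow> bool" where
  addr_Nil: "is_addr t []"
| addr_Cons: "1 \<le> i \<Longrightarrow> i \<le> length ts \<Longrightarrow> is_addr (ts ! (i - 1)) a \<Longrightarrow> is_addr (Node ts) (i # a)"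

fun child :: "topo \<Rightarrow> nat \<Rightarrow> topo" where
  "child (Node ts) i = ts ! (i - 1)"
| "child Star i = Star"

fun subtree :: "topo \<Rightarrow> nat list \<Rightarrow> topo" where
  "subtree t [] = t"
| "subtree t (i # a) = subtree (child t i) a"

definition is_embedding :: "topo \<Rightarrow> topo \<Rightarrow> (nat list \<Rightarrow> nat list) \<Rightarrow> bool" where
  "is_embedding t1 t2 f \<longleftrightarrow>
     (\<forall>a. is_addr t1 a \<longrightarrow> is_addr t2 (f a)) \<and>
     inj_on f {a. is_addr t1 a} \<and>
     f [] = [] \<and>
     (\<forall>a. is_addr t1 a \<and> subtree t1 a = Star \<longrightarrow> subtree t2 (f a) = Star) \<and>
     (\<forall>a a'. is_addr t1 a \<and> is_addr t1 a' \<longrightarrow> (prefix a a' \<longleftrightarrow> prefix (f a) (f a')))"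

fun empty_tree :: "topo \<Rightarrow> ('pkt, 'r) ptree" where
  "empty_tree Star = Leaf []"
| "empty_tree (Node ts) = Internal (map empty_tree ts) []"

definition relabel :: "(nat \<Rightarrow> nat list) \<Rightarrow> nat list \<Rightarrow> (nat \<times> 'r) list \<Rightarrow> (nat \<times> 'r) list" where
  "relabel F \<alpha> p =
     map (\<lambda>(i, r). (THE j. prefix (\<alpha> @ [j]) (F i), r))
         (filter (\<lambda>(i, r). \<exists>j. prefix (\<alpha> @ [j]) (F i)) p)"

text \<open>build n F Ls p t alpha computes the tree hat-f(q)_alpha of topology t = t2/alpha,
  where F i = f(i) for the n children, Ls ! (i-1) = lifting of the i-th subtree
  and p is the root PIFO of q.\<close>
function build :: "nat \<Rightarrow> (nat \<Rightarrow> nat list) \<Rightarrow> ('pkt, 'r) ptree list \<Rightarrow> (nat \<times> 'r) list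
                   \<Rightarrow> topo \<Rightarrow> nat list \<Rightarrow> ('pkt, 'r) ptree" where
  "build n F Ls p t \<alpha> =
     (if \<exists>i. 1 \<le> i \<and> i \<le> n \<and> F i = \<alpha> then
        Ls ! ((SOME i. 1 \<le> i \<and> i \<le> n \<and> F i = \<alpha>) - 1)
      else (case t of
              Star \<Rightarrow> Leaf []
            | Node ts \<Rightarrow>
                Internal
                  (map (\<lambda>j. if \<exists>i. 1 \<le> i \<and> i \<le> n \<and> prefix (\<alpha> @ [j]) (F i)
                            then build n F Ls p (ts ! (j - 1)) (\<alpha> @ [j])
                            else empty_tree (ts ! (j - 1)))
                       [1..<Suc (length ts)])
                  (relabel F \<alpha> p)))"
  by pat_completeness auto
termination
  apply (relation "measure (\<lambda>(n, F, Ls, p, t, \<alpha>). size t)")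
  by (auto intro!: size_nth_less_aux)

text \<open>Lifting hat-f : PIFOTree(t1) -> PIFOTree(t2), by recursion on t1.
  f_i is given by f(i.alpha) = f(i).f_i(alpha).\<close>
function lift :: "(nat list \<Rightarrow> nat list) \<Rightarrow> topo \<Rightarrow> topo \<Rightarrow> ('pkt, 'r) ptree \<Rightarrow> ('pkt, 'r) ptree" where
  "lift f Star t2 q = q"
| "lift f (Node ts1) t2 (Internal qs p) =
     build (length ts1) (\<lambda>i. f [i])
       (map (\<lambda>i. lift (\<lambda>a. drop (length (f [i])) (f (i # a))) (ts1 ! (i - 1))
                      (subtree t2 (f [i])) (qs ! (i - 1)))
            [1..<Suc (length ts1)])
       p t2 []"
| "lift f (Node ts1) t2 (Leaf p) = Leaf p"
  by pat_completeness auto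
termination
  apply (relation "measure (\<lambda>(f, t1, t2, q). size t1)")
  by (auto intro!: size_nth_less_aux)

end

theory Submission
  imports Defs
begin

(* Popping q follows the child i chosen by the root PIFO. In the lifted tree the entry (i, r) survives
   relabelling at every node on the path from the root to f(i), as the entry (j, r) pointing to the
   next step j of the path; since relabelling keeps ranks and order, it is still the one popped there.
   The prefix condition on the embedding makes the f(i) prefix-free, so the path does not stop early
   at another f(i'). At f(i) sits the lifting of the i-th subtree, which pops by induction on t1. *)

lemma pop_pifo_Nil [simp]: "pop_pifo [] = None"
  by (simp add: pop_pifo_def)

lemma pop_pifo_append_Cons:
  assumes "\<forall>y\<in>set xs. snd e < snd y" and "\<forall>y\<in>set ys. snd e \<le> snd y"
  shows "pop_pifo (xs @ e # ys) = Some (fst e, xs @ ys)"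
proof -
  let ?p = "xs @ e # ys"
  let ?min = "\<lambda>k. k < length ?p \<and> (\<forall>j<length ?p. snd (?p ! k) \<le> snd (?p ! j))"
  have "\<forall>y\<in>set ?p. snd e \<le> snd y"
    using assms by (auto intro: less_imp_le)
  then have "snd e \<le> snd (?p ! j)" if "j < length ?p" for j
    using nth_mem[OF that] by blast
  then have "?min (length xs)"
    unfolding nth_append_length by (intro conjI allI impI) simp_all
  moreover have "length xs \<le> k" if "?min k" for k
  proof (rule ccontr)
    assume "\<not> length xs \<le> k"
    then have "snd e < snd (?p ! k)" using assms(1) by (simp add: nth_append)
    moreover have "snd (?p ! k) \<le> snd (?p ! length xs)"
      using that[THEN conjunct2, rule_format, of "length xs"] by simp
    ultimately show False by simp
  qed
  ultimately have "(LEAST k. ?min k) = length xs" by (rule Least_equality)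
  then show ?thesis unfolding pop_pifo_def Let_def by simp
qed

lemma ex_min_rank_split:
  fixes p :: "('a \<times> 'r::linorder) list"
  assumes "p \<noteq> []"
  shows "\<exists>xs e ys. p = xs @ e # ys \<and> (\<forall>y\<in>set xs. snd e < snd y) \<and> (\<forall>y\<in>set ys. snd e \<le> snd y)"
  using assms
proof (induction p)
  case (Cons a p)
  show ?case
  proof (cases "p = []")
    case True
    have "a # p = [] @ a # []"
      using True by simp
    then show ?thesis
      by fastforce
  next
    case False
    obtain xs e ys where p: "p = xs @ e # ys"
      and xs: "\<forall>y\<in>set xs. snd e < snd y" and ys: "\<forall>y\<in>set ys. snd e \<le> snd y"
      using Cons.IH[OF False] by blast
    show ?thesis
    proof (cases "snd a \<le> snd e")
      case True
      have "a # p = [] @ a # p"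
        by simp
      moreover have "\<forall>y\<in>set p. snd a \<le> snd y"
        using p xs ys by (auto intro: order_trans[OF True] less_imp_le)
      ultimately show ?thesis
        by fastforce
    next
      case False
      have "a # p = (a # xs) @ e # ys"
        using p by simp
      moreover have "\<forall>y\<in>set (a # xs). snd e < snd y"
        using xs False by auto
      ultimately show ?thesis
        using ys by blast
    qed
  qed
qed simp

lemma pop_pifo_SomeE:
  assumes "pop_pifo p = Some (x, p')"
  obtains xs e ys where "p = xs @ e # ys" and "\<forall>y\<in>set xs. snd e < snd y"
    and "\<forall>y\<in>set ys. snd e \<le> snd y" and "x = fst e" and "p' = xs @ ys"
proof -
  from assms have "p \<noteq> []" by auto
  then obtain xs e ys where "p = xs @ e # ys" "\<forall>y\<in>set xs. snd e < snd y" "\<forall>y\<in>set ys. snd e \<le> snd y"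
    using ex_min_rank_split by blast
  moreover from this have "pop_pifo p = Some (fst e, xs @ ys)" by (simp add: pop_pifo_append_Cons)
  ultimately show thesis using assms that by simp
qed

lemma pop_pifo_map_filter:
  assumes "pop_pifo p = Some (x, p')" and "P x"
  shows "pop_pifo (map (\<lambda>(a, r). (g a, r)) (filter (\<lambda>(a, r). P a) p)) =
         Some (g x, map (\<lambda>(a, r). (g a, r)) (filter (\<lambda>(a, r). P a) p'))"
proof -
  obtain xs e ys where p: "p = xs @ e # ys" and xs: "\<forall>y\<in>set xs. snd e < snd y"
    and ys: "\<forall>y\<in>set ys. snd e \<le> snd y" and "x = fst e" "p' = xs @ ys"
    using assms(1) by (rule pop_pifo_SomeE)
  let ?h = "\<lambda>zs. map (\<lambda>(a, r). (g a, r)) (filter (\<lambda>(a, r). P a) zs)"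
  have "\<forall>y\<in>set (?h xs). snd e < snd y" "\<forall>y\<in>set (?h ys). snd e \<le> snd y"
    using xs ys by auto
  then have "pop_pifo (?h xs @ (g x, snd e) # ?h ys) = Some (fst (g x, snd e), ?h xs @ ?h ys)"
    by (intro pop_pifo_append_Cons) simp_all
  then show ?thesis
    using assms(2) p \<open>x = fst e\<close> \<open>p' = xs @ ys\<close> by (cases e) simp
qed

lemma pop_pifo_relabel:
  assumes "pop_pifo p = Some (i, p')" and "F i = \<alpha> @ j # s"
  shows "pop_pifo (relabel F \<alpha> p) = Some (j, relabel F \<alpha> p')"
proof -
  have "(THE j'. prefix (\<alpha> @ [j']) (F i)) = j"
    using assms(2) by (intro the_equality) auto
  moreover have "\<exists>j'. prefix (\<alpha> @ [j']) (F i)"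
    using assms(2) by auto
  ultimately show ?thesis
    unfolding relabel_def
    using pop_pifo_map_filter[OF assms(1), where P = "\<lambda>i. \<exists>j'. prefix (\<alpha> @ [j']) (F i)"
        and g = "\<lambda>i. THE j'. prefix (\<alpha> @ [j']) (F i)"]
    by simp
qed

lemma is_addr_Cons_iff:
  "is_addr t (i # a) \<longleftrightarrow> (\<exists>ts. t = Node ts \<and> 1 \<le> i \<and> i \<le> length ts \<and> is_addr (ts ! (i - 1)) a)"
  by (auto elim: is_addr.cases intro: is_addr.intros)

lemma is_addr_singleton: "is_addr (Node ts) [i] \<longleftrightarrow> 1 \<le> i \<and> i \<le> length ts"
  by (auto simp: is_addr_Cons_iff intro: is_addr.addr_Nil)

lemma is_addr_subtree: "is_addr t (a @ b) \<Longrightarrow> is_addr (subtree t a) b"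
  by (induction a arbitrary: t) (auto simp: is_addr_Cons_iff)

lemma subtree_append: "subtree t (a @ b) = subtree (subtree t a) b"
  by (induction a arbitrary: t) auto

definition sub_embedding :: "(nat list \<Rightarrow> nat list) \<Rightarrow> nat \<Rightarrow> nat list \<Rightarrow> nat list" where
  "sub_embedding f i = (\<lambda>a. drop (length (f [i])) (f (i # a)))"

lemma lift_Internal:
  "lift f (Node ts) t2 (Internal qs p) =
     build (length ts) (\<lambda>i. f [i])
       (map (\<lambda>i. lift (sub_embedding f i) (ts ! (i - 1)) (subtree t2 (f [i])) (qs ! (i - 1)))
            [1..<Suc (length ts)])
       p t2 []"
  by (simp add: sub_embedding_def)

lemma is_embedding_root_child_prefix:
  assumes "is_embedding (Node ts) t2 f" and "1 \<le> i" "i \<le> length ts" and "1 \<le> i'" "i' \<le> length ts"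
  shows "prefix (f [i']) (f [i]) \<longleftrightarrow> i' = i"
proof -
  have "is_addr (Node ts) [i]" "is_addr (Node ts) [i']"
    using assms(2-) by (simp_all add: is_addr_singleton)
  then have "prefix [i'] [i] \<longleftrightarrow> prefix (f [i']) (f [i])"
    using assms(1) unfolding is_embedding_def by blast
  then show ?thesis
    by auto
qed

lemma is_embedding_Cons:
  assumes "is_embedding (Node ts) t2 f" and "is_addr (Node ts) (i # a)"
  shows "f (i # a) = f [i] @ sub_embedding f i a"
proof -
  have "is_addr (Node ts) [i]"
    using assms(2) by (auto simp: is_addr_Cons_iff is_addr.addr_Nil)
  moreover have "prefix [i] (i # a)"
    by simp
  ultimately have "prefix (f [i]) (f (i # a))"
    using assms unfolding is_embedding_def by blast
  then show ?thesis
    by (auto simp: sub_embedding_def prefix_def)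
qed

lemma is_embedding_sub_embedding:
  assumes emb: "is_embedding (Node ts) t2 f" and "1 \<le> i" "i \<le> length ts"
  shows "is_embedding (ts ! (i - 1)) (subtree t2 (f [i])) (sub_embedding f i)"
proof -
  let ?g = "sub_embedding f i"
  have addr: "is_addr (Node ts) (i # a)" if "is_addr (ts ! (i - 1)) a" for a
    using assms(2,3) that by (auto intro: is_addr.intros)
  have split: "f (i # a) = f [i] @ ?g a" if "is_addr (ts ! (i - 1)) a" for a
    using is_embedding_Cons[OF emb addr[OF that]] .
  show ?thesis
    unfolding is_embedding_def
  proof (intro conjI allI impI)
    fix a
    assume a: "is_addr (ts ! (i - 1)) a"
    then have "is_addr t2 (f [i] @ ?g a)"
      using emb addr split unfolding is_embedding_def by metis
    then show "is_addr (subtree t2 (f [i])) (?g a)"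
      by (rule is_addr_subtree)
  next
    show "inj_on ?g {a. is_addr (ts ! (i - 1)) a}"
    proof (rule inj_onI)
      fix a a'
      assume "a \<in> {a. is_addr (ts ! (i - 1)) a}" "a' \<in> {a. is_addr (ts ! (i - 1)) a}" "?g a = ?g a'"
      then have "f (i # a) = f (i # a')" and "is_addr (Node ts) (i # a)" "is_addr (Node ts) (i # a')"
        using split addr by auto
      then show "a = a'"
        using emb unfolding is_embedding_def inj_on_def by blast
    qed
  next
    show "?g [] = []"
      by (simp add: sub_embedding_def)
  next
    fix a
    assume a: "is_addr (ts ! (i - 1)) a \<and> subtree (ts ! (i - 1)) a = Star"
    then have "subtree t2 (f (i # a)) = Star"
      using emb addr unfolding is_embedding_def by simp
    then show "subtree (subtree t2 (f [i])) (?g a) = Star"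
      using a split by (simp add: subtree_append)
  next
    fix a a'
    assume "is_addr (ts ! (i - 1)) a \<and> is_addr (ts ! (i - 1)) a'"
    then have "prefix (i # a) (i # a') \<longleftrightarrow> prefix (f [i] @ ?g a) (f [i] @ ?g a')"
      using emb addr split unfolding is_embedding_def by metis
    then show "prefix a a' \<longleftrightarrow> prefix (?g a) (?g a')"
      by simp
  qed
qed

lemma pop_Internal_ne_None:
  assumes "pop_pifo p = Some (j, p')" and "1 \<le> j" "j \<le> length qs" and "pop (qs ! (j - 1)) \<noteq> None"
  shows "pop (Internal qs p) \<noteq> None"
  using assms by (auto split: option.split)

text \<open>Induction along the path from \<open>\<alpha>\<close> down to \<open>F i\<close>: by prefix-freeness no node strictly
  above \<open>F i\<close> is an image \<open>F i'\<close>, so \<open>build\<close> produces an internal node there, and its relabelled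
  PIFO pops the next step of the path.\<close>

lemma pop_build_ne_None:
  assumes pop_p: "pop_pifo p = Some (i, p')" and i: "1 \<le> i" "i \<le> n"
    and pop_Ls: "pop (Ls ! (i - 1)) \<noteq> None"
    and prefix_free: "\<forall>i'. 1 \<le> i' \<and> i' \<le> n \<and> prefix (F i') (F i) \<longrightarrow> i' = i"
  shows "F i = \<alpha> @ s \<Longrightarrow> is_addr t s \<Longrightarrow> pop (build n F Ls p t \<alpha>) \<noteq> None"
proof (induction s arbitrary: \<alpha> t)
  case Nil
  then have "(SOME i'. 1 \<le> i' \<and> i' \<le> n \<and> F i' = \<alpha>) = i"
    using i prefix_free by (intro some_equality) auto
  then have "build n F Ls p t \<alpha> = Ls ! (i - 1)"
    using Nil i by (subst build.simps) (auto simp del: build.simps)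
  then show ?case
    using pop_Ls by simp
next
  case (Cons j s)
  obtain ts where t: "t = Node ts" and j: "1 \<le> j" "j \<le> length ts" and s: "is_addr (ts ! (j - 1)) s"
    using Cons.prems(2) unfolding is_addr_Cons_iff by blast
  have not_image: "\<nexists>i'. 1 \<le> i' \<and> i' \<le> n \<and> F i' = \<alpha>"
    using Cons.prems(1) prefix_free by force
  define qs where "qs = map (\<lambda>j. if \<exists>i. 1 \<le> i \<and> i \<le> n \<and> prefix (\<alpha> @ [j]) (F i)
                                then build n F Ls p (ts ! (j - 1)) (\<alpha> @ [j])
                                else empty_tree (ts ! (j - 1)))
                         [1..<Suc (length ts)]"
  have build_t: "build n F Ls p t \<alpha> = Internal qs (relabel F \<alpha> p)"
    unfolding t qs_def by (subst build.simps) (simp only: not_image if_False topo.case)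
  have "qs ! (j - 1) = build n F Ls p (ts ! (j - 1)) (\<alpha> @ [j])"
    using i j Cons.prems(1) by (auto simp: qs_def nth_map_upt simp del: build.simps upt_Suc)
  moreover have "pop (build n F Ls p (ts ! (j - 1)) (\<alpha> @ [j])) \<noteq> None"
    using Cons.IH Cons.prems(1) s by (simp del: build.simps)
  moreover have "pop_pifo (relabel F \<alpha> p) = Some (j, relabel F \<alpha> p')"
    using pop_pifo_relabel[OF pop_p] Cons.prems(1) by simp
  moreover have "length qs = length ts"
    by (simp add: qs_def del: upt_Suc)
  ultimately show ?case
    unfolding build_t using j by (intro pop_Internal_ne_None[where j = j]) (simp_all del: build.simps)
qed

theorem lemma5p6:
  fixes t1 t2 :: topo and f :: "nat list \<Rightarrow> nat list"
    and q :: "('pkt, 'r::linorder) ptree"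
  assumes "is_embedding t1 t2 f"
    and "wf_tree t1 q"
    and "pop q \<noteq> None"
  shows "pop (lift f t1 t2 q) \<noteq> None"
  using assms
proof (induction t1 arbitrary: f t2 q)
  case (Node ts)
  then obtain qs p where q: "q = Internal qs p" and len: "length qs = length ts"
    and wf: "\<forall>i<length ts. wf_tree (ts ! i) (qs ! i)"
    by (cases q) auto
  obtain i p' where pop_p: "pop_pifo p = Some (i, p')" and i: "1 \<le> i" "i \<le> length ts"
    and pop_qi: "pop (qs ! (i - 1)) \<noteq> None"
    using Node.prems(3) len unfolding q by (auto split: option.splits if_splits)
  let ?Ls = "map (\<lambda>i. lift (sub_embedding f i) (ts ! (i - 1)) (subtree t2 (f [i])) (qs ! (i - 1)))
                 [1..<Suc (length ts)]"
  have "pop (lift (sub_embedding f i) (ts ! (i - 1)) (subtree t2 (f [i])) (qs ! (i - 1))) \<noteq> None"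
    using Node.IH is_embedding_sub_embedding[OF Node.prems(1) i] wf i pop_qi by simp
  then have "pop (?Ls ! (i - 1)) \<noteq> None"
    using i by (simp add: nth_map_upt del: upt_Suc)
  moreover have "\<forall>i'. 1 \<le> i' \<and> i' \<le> length ts \<and> prefix (f [i']) (f [i]) \<longrightarrow> i' = i"
    using is_embedding_root_child_prefix[OF Node.prems(1) i] by blast
  moreover have "is_addr t2 (f [i])"
    using Node.prems(1) i is_addr_singleton unfolding is_embedding_def by blast
  ultimately show ?case
    unfolding q lift_Internal by (intro pop_build_ne_None[OF pop_p i, where s = "f [i]"]) simp_all
qed simp

end
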